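(* Let $B:\mathbb{Z}\times\mathbb{Z}\to\mathbb{R}$ be defined by the recurrence $$B(r,s)=\begin{cases}1 & s\le 0,\\ 0 & s>0 \text{ and } r<s,\\ \min\Big(\tfrac12\big[B(r-1,s)+B(r-1,s-1)\big],\ B(r-2,s-1)\Big) & \text{otherwise.}\end{cases}$$ Then for all integers $c\ge 3$ and $s\ge 2$, $B(cs-1,s)\ge 1-\frac{1}{2^{c-1}}$. *)

theory Defs
  imports Complex_Main
begin

function B :: "int \<Rightarrow> int \<Rightarrow> real" where
  "B r s = (if s \<le> 0 then 1
            else if r < s then 0
            else min ((B (r - 1) s + B (r - 1) (s - 1)) / 2) (B (r - 2) (s - 1)))"
  by auto
termination
  by (relation "measure (\<lambda>(r, s). nat r)") auto

end

theory Submission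
  imports Defs
begin

text \<open>
  Dropping the min from the recursion of \<open>B\<close>, and cutting it off to 0 already on
  \<open>r \<le> 2s - 2\<close>, gives a function that is non-increasing along the diagonal
  \<open>(r, s) \<mapsto> (r - 2, s - 1)\<close>; hence the min never binds for it and it bounds \<open>B\<close> from
  below. On and above the cut-off line it equals \<open>1 - 2 P(X \<le> s - 1)\<close> for
  \<open>X \<sim> Bin(r + 1, 1/2)\<close>, so it suffices to show \<open>P(Bin(cs, 1/2) \<le> s - 1) \<le> 2^-c\<close>.
  Adding one trial multiplies \<open>P(Bin(m, 1/2) \<le> k)\<close> by at most \<open>(m + 1) / (2(m + 1 - k))\<close>.
  Starting from the median value \<open>P(Bin(2t + 1, 1/2) \<le> t) = 1/2\<close> this yields the case
  \<open>c = 3\<close> up to a factorial inequality, and every further block of \<open>s\<close> trials at least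
  halves the probability.
\<close>

declare B.simps[simp del]

text \<open>\<open>binom_cdf n k\<close> is \<open>P(X \<le> k)\<close> for \<open>X \<sim> Bin(n, 1/2)\<close>.\<close>

fun binom_cdf :: "nat \<Rightarrow> int \<Rightarrow> real" where
  "binom_cdf 0 k = (if k \<ge> 0 then 1 else 0)"
| "binom_cdf (Suc n) k = (binom_cdf n k + binom_cdf n (k - 1)) / 2"

lemma binom_cdf_neg: "k < 0 \<Longrightarrow> binom_cdf n k = 0"
  by (induction n arbitrary: k) auto

lemma binom_cdf_nonneg: "0 \<le> binom_cdf n k"
  by (induction n arbitrary: k) auto

lemma binom_cdf_complement: "binom_cdf n k + binom_cdf n (int n - k - 1) = 1"
proof (induction n arbitrary: k)
  case 0
  then show ?case by auto
next
  case (Suc n)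
  have "binom_cdf n k + binom_cdf n (int n - k - 1) = 1"
    and "binom_cdf n (k - 1) + binom_cdf n (int n - (k - 1) - 1) = 1"
    using Suc by blast+
  then show ?case by (simp add: field_simps)
qed

lemma binom_cdf_median: "binom_cdf (2 * t + 1) (int t) = 1 / 2"
  using binom_cdf_complement[of "2 * t + 1" "int t"] by simp

lemma binom_cdf_pred_le: "of_int (int n - k + 1) * binom_cdf n (k - 1) \<le> of_int k * binom_cdf n k"
proof (induction n arbitrary: k)
  case 0
  then show ?case by auto
next
  case (Suc n)
  have "(int n - k + 1) * binom_cdf n (k - 1) \<le> k * binom_cdf n k"
    and "(int n - (k - 1) + 1) * binom_cdf n (k - 2) \<le> (k - 1) * binom_cdf n (k - 1)"
    using Suc[of k] Suc[of "k - 1"] by (simp_all add: algebra_simps)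
  then show ?case by (simp add: algebra_simps)
qed

lemma binom_cdf_Suc_le:
  "2 * of_int (int n - k + 1) * binom_cdf (Suc n) k \<le> real (Suc n) * binom_cdf n k"
  using binom_cdf_pred_le[of n k] by (simp add: algebra_simps)

declare binom_cdf.simps(2)[simp del]

lemma binom_cdf_shift_le:
  assumes "k \<le> n"
  shows "2 ^ j * fact (n + j - k) * fact n * binom_cdf (n + j) (int k)
           \<le> (fact (n + j) * fact (n - k) * binom_cdf n (int k) :: real)"
proof (induction j)
  case 0
  then show ?case by simp
next
  case (Suc j)
  define m where "m = n + j"
  have m_k: "n + Suc j = Suc m" "Suc m - k = Suc (m - k)"
    using assms unfolding m_def by auto
  have "real_of_int (int m - int k + 1) = real (Suc (m - k))"
    using assms unfolding m_def by (simp add: of_nat_diff)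
  note step = binom_cdf_Suc_le[of m "int k", unfolded this]
  have "2 ^ Suc j * fact (Suc (m - k)) * fact n * binom_cdf (Suc m) (int k)
      = (2 ^ j * fact (m - k) * fact n) * (2 * real (Suc (m - k)) * binom_cdf (Suc m) (int k))"
    by (simp only: fact_Suc power_Suc mult_ac)
  also have "\<dots> \<le> (2 ^ j * fact (m - k) * fact n) * (Suc m * binom_cdf m (int k))"
    by (rule mult_left_mono[OF step]) simp
  also have "\<dots> = Suc m * (2 ^ j * fact (m - k) * fact n * binom_cdf m (int k))"
    by simp
  also have "\<dots> \<le> Suc m * (fact m * fact (n - k) * binom_cdf n (int k))"
    using Suc.IH unfolding m_def by (rule mult_left_mono) simp
  also have "\<dots> = fact (Suc m) * fact (n - k) * binom_cdf n (int k)"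
    by (simp only: fact_Suc mult_ac)
  finally show ?case unfolding m_k .
qed

lemma fact_three_halves_le:
  "fact (3 * t + 3) * fact (t + 1) \<le> 2 ^ t * fact (2 * t + 1) * (fact (2 * t + 3) :: nat)"
proof (induction t)
  case 0
  then show ?case by (simp add: fact_numeral)
next
  case (Suc t)
  have shifts: "3 * Suc t + 3 = Suc (Suc (Suc (3 * t + 3)))" "Suc t + 1 = Suc (t + 1)"
    "2 * Suc t + 1 = Suc (Suc (2 * t + 1))" "2 * Suc t + 3 = Suc (Suc (2 * t + 3))"
    by simp_all
  have poly: "(3*t+4) * (3*t+5) * (3*t+6) * (t+2) \<le> 2 * (2*t+2) * (2*t+3) * (2*t+4) * (2*t+5)"
    by (simp add: algebra_simps)
  have "fact (3 * Suc t + 3) * fact (Suc t + 1)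
      = (fact (3 * t + 3) * fact (t + 1)) * ((3*t+4) * (3*t+5) * (3*t+6) * (t+2))"
    unfolding shifts fact_Suc by (simp add: algebra_simps)
  also have "\<dots> \<le> (2 ^ t * fact (2 * t + 1) * fact (2 * t + 3))
                    * (2 * (2*t+2) * (2*t+3) * (2*t+4) * (2*t+5))"
    by (rule mult_mono[OF Suc.IH poly]) simp_all
  also have "\<dots> = 2 ^ Suc t * fact (2 * Suc t + 1) * fact (2 * Suc t + 3)"
    unfolding shifts fact_Suc by (simp add: algebra_simps)
  finally show ?case .
qed

lemma binom_cdf_third_le: "binom_cdf (3 * t + 3) (int t) \<le> 1 / 8"
proof -
  define D :: real where "D = 2 ^ t * fact (2 * t + 1) * fact (2 * t + 3)"
  have "D > 0" unfolding D_def by simp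
  have "real (fact (3 * t + 3) * fact (t + 1))
      \<le> real (2 ^ t * fact (2 * t + 1) * fact (2 * t + 3))"
    using fact_three_halves_le[of t] by (simp only: of_nat_le_iff)
  then have fact_bound: "fact (3 * t + 3) * fact (t + 1) \<le> D"
    unfolding D_def by (simp only: of_nat_mult of_nat_fact of_nat_power of_nat_numeral)
  have shift_indices: "2 * t + 1 + (t + 2) = 3 * t + 3" "3 * t + 3 - t = 2 * t + 3"
    "2 * t + 1 - t = t + 1"
    by simp_all
  have rearrange: "2 ^ (t + 2) * x * y * q = 2 ^ t * y * x * (4 * q)" for x y q :: real
    by (simp add: power_add)
  have "D * (4 * binom_cdf (3 * t + 3) (int t))
      = 2 ^ (t + 2) * fact (2 * t + 3) * fact (2 * t + 1) * binom_cdf (3 * t + 3) (int t)"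
    unfolding D_def rearrange ..
  also have "\<dots> \<le> fact (3 * t + 3) * fact (t + 1) * binom_cdf (2 * t + 1) (int t)"
    by (rule binom_cdf_shift_le[of t "2 * t + 1" "t + 2", unfolded shift_indices]) simp
  also have "\<dots> \<le> D * (1 / 2)"
    unfolding binom_cdf_median by (rule mult_right_mono[OF fact_bound]) simp
  finally have "4 * binom_cdf (3 * t + 3) (int t) \<le> 1 / 2"
    using \<open>D > 0\<close> by (rule mult_left_le_imp_le)
  then show ?thesis by simp
qed

text \<open>
  The one-trial ratio \<open>(n + 1) / (2(n - s + 2))\<close> for \<open>k = s - 1\<close>,
  at its worst case \<open>n = 3s\<close>.
\<close>

definition decay_ratio :: "nat \<Rightarrow> real" where
  "decay_ratio s = (3 * real s + 1) / (4 * (real s + 1))"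

lemma binom_cdf_Suc_le_decay:
  assumes "1 \<le> s" and "3 * s \<le> n"
  shows "binom_cdf (Suc n) (int s - 1) \<le> decay_ratio s * binom_cdf n (int s - 1)"
proof -
  have pos: "real n - s + 2 > 0" using assms by simp
  have "0 \<le> (real n - 3 * real s) * (real s - 1)" using assms by simp
  then have ratio: "Suc n \<le> decay_ratio s * (2 * (real n - s + 2))"
    unfolding decay_ratio_def by (simp add: field_simps)
  have "2 * (real n - s + 2) * binom_cdf (Suc n) (int s - 1) \<le> Suc n * binom_cdf n (int s - 1)"
    using binom_cdf_Suc_le[of n "int s - 1"] by (simp add: algebra_simps)
  also have "\<dots> \<le> decay_ratio s * (2 * (real n - s + 2)) * binom_cdf n (int s - 1)"
    by (rule mult_right_mono[OF ratio binom_cdf_nonneg])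
  also have "\<dots> = 2 * (real n - s + 2) * (decay_ratio s * binom_cdf n (int s - 1))"
    by (simp only: ac_simps)
  finally show ?thesis
    by (rule mult_left_le_imp_le) (use pos in simp)
qed

lemma binom_cdf_add_le_decay:
  assumes "1 \<le> s" and "3 * s \<le> n"
  shows "binom_cdf (n + j) (int s - 1) \<le> decay_ratio s ^ j * binom_cdf n (int s - 1)"
proof (induction j)
  case 0
  then show ?case by simp
next
  case (Suc j)
  have "binom_cdf (n + Suc j) (int s - 1) \<le> decay_ratio s * binom_cdf (n + j) (int s - 1)"
    using binom_cdf_Suc_le_decay[of s "n + j"] assms by simp
  also have "\<dots> \<le> decay_ratio s * (decay_ratio s ^ j * binom_cdf n (int s - 1))"
    by (rule mult_left_mono[OF Suc.IH]) (simp add: decay_ratio_def)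
  finally show ?case by (simp add: mult.assoc)
qed

lemma decay_ratio_pow_le_half:
  assumes "2 \<le> s"
  shows "decay_ratio s ^ s \<le> 1 / 2"
proof (cases "s = 2")
  case True
  then show ?thesis by (simp add: decay_ratio_def power2_eq_square)
next
  case False
  have "decay_ratio s ^ s \<le> (3 / 4) ^ s"
    unfolding decay_ratio_def by (intro power_mono) (simp_all add: field_simps)
  also have "\<dots> \<le> (3 / 4) ^ 3"
    using False assms by (intro power_decreasing) auto
  also have "\<dots> \<le> 1 / 2"
    by (simp add: power3_eq_cube)
  finally show ?thesis .
qed

lemma binom_cdf_mult_le:
  assumes "2 \<le> s" and "3 \<le> c"
  shows "binom_cdf (c * s) (int s - 1) \<le> 1 / 2 ^ c"
  using assms(2)
proof (induction c rule: dec_induct)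
  case base
  have "3 * s = 3 * (s - 1) + 3" "int s - 1 = int (s - 1)"
    using assms(1) by simp_all
  then show ?case
    using binom_cdf_third_le[of "s - 1"] by simp
next
  case (step c)
  have "binom_cdf (Suc c * s) (int s - 1) = binom_cdf (c * s + s) (int s - 1)"
    by (simp add: algebra_simps)
  also have "\<dots> \<le> decay_ratio s ^ s * binom_cdf (c * s) (int s - 1)"
    using assms step.hyps(1) by (intro binom_cdf_add_le_decay) auto
  also have "\<dots> \<le> 1 / 2 * (1 / 2 ^ c)"
    using decay_ratio_pow_le_half[OF assms(1)] step.IH
    by (intro mult_mono) (simp_all add: binom_cdf_nonneg decay_ratio_def)
  finally show ?case by simp
qed

function B_avg :: "int \<Rightarrow> int \<Rightarrow> real" where
  "B_avg r s = (if s \<le> 0 then 1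
               else if r \<le> 2 * s - 2 then 0
               else (B_avg (r - 1) s + B_avg (r - 1) (s - 1)) / 2)"
  by auto
termination
  by (relation "measure (\<lambda>(r, s). nat r)") auto

declare B_avg.simps[simp del]

lemma B_avg_bounds: "0 \<le> B_avg r s \<and> B_avg r s \<le> 1"
proof (induction r s rule: B_avg.induct)
  case (1 r s)
  then show ?case
    using B_avg.simps[of r s] by (auto simp: divide_simps)
qed

lemma B_nonneg: "0 \<le> B r s"
proof (induction r s rule: B.induct)
  case (1 r s)
  then show ?case
    by (subst B.simps) (auto simp: divide_simps)
qed

lemma B_avg_diag_mono: "B_avg r s \<le> B_avg (r - 2) (s - 1)"
proof (induction r s rule: B_avg.induct)
  case (1 r s)
  consider "s \<le> 1" | "2 \<le> s" "r \<le> 2 * s - 2" | "2 \<le> s" "\<not> r \<le> 2 * s - 2"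
    by linarith
  then show ?case
  proof cases
    case 1
    then show ?thesis
      using B_avg_bounds[of r s] by (subst (2) B_avg.simps) simp
  next
    case 2
    then show ?thesis
      using B_avg_bounds[of "r - 2" "s - 1"] by (subst B_avg.simps) simp
  next
    case 3
    have "B_avg r s = (B_avg (r - 1) s + B_avg (r - 1) (s - 1)) / 2"
      using 3 by (subst B_avg.simps) simp
    moreover have "B_avg (r - 2) (s - 1) = (B_avg (r - 3) (s - 1) + B_avg (r - 3) (s - 2)) / 2"
      using 3 by (subst B_avg.simps) (simp add: algebra_simps)
    moreover have "B_avg (r - 1) s \<le> B_avg (r - 3) (s - 1)"
      and "B_avg (r - 1) (s - 1) \<le> B_avg (r - 3) (s - 2)"
      using "1.IH" 3 by (simp_all add: algebra_simps)
    ultimately show ?thesis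
      by simp
  qed
qed

lemma B_avg_le_B: "B_avg r s \<le> B r s"
proof (induction r s rule: B.induct)
  case (1 r s)
  consider "s \<le> 0" | "0 < s" "r < s" | "0 < s" "s \<le> r"
    by linarith
  then show ?case
  proof cases
    case 1
    then show ?thesis
      by (simp add: B_avg.simps B.simps)
  next
    case 2
    then show ?thesis
      using B_nonneg[of r s] by (subst B_avg.simps) simp
  next
    case 3
    have "B r s = min ((B (r - 1) s + B (r - 1) (s - 1)) / 2) (B (r - 2) (s - 1))"
      using 3 by (subst B.simps) simp
    moreover have "B_avg r s \<le> (B_avg (r - 1) s + B_avg (r - 1) (s - 1)) / 2"
      using 3 B_avg_bounds[of "r - 1" s] B_avg_bounds[of "r - 1" "s - 1"]
      by (subst B_avg.simps) simp
    moreover have "B_avg (r - 1) s \<le> B (r - 1) s" "B_avg (r - 1) (s - 1) \<le> B (r - 1) (s - 1)"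
      and "B_avg (r - 2) (s - 1) \<le> B (r - 2) (s - 1)"
      using "1.IH" 3 by simp_all
    ultimately show ?thesis
      using B_avg_diag_mono[of r s] by simp
  qed
qed

lemma B_avg_eq_binom_cdf:
  "2 * s - 2 \<le> r \<Longrightarrow> B_avg r s = 1 - 2 * binom_cdf (nat (r + 1)) (s - 1)"
proof (induction r s rule: B_avg.induct)
  case (1 r s)
  consider "s \<le> 0" | "0 < s" "r = 2 * s - 2" | "0 < s" "2 * s - 2 < r"
    using "1.prems" by linarith
  then show ?case
  proof cases
    case 1
    then show ?thesis
      by (simp add: B_avg.simps binom_cdf_neg)
  next
    case 2
    then have "nat (r + 1) = 2 * nat (s - 1) + 1" "s - 1 = int (nat (s - 1))"
      by simp_all
    then have "binom_cdf (nat (r + 1)) (s - 1) = 1 / 2"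
      by (metis binom_cdf_median)
    then show ?thesis
      using 2 by (subst B_avg.simps) simp
  next
    case 3
    have "B_avg r s = (B_avg (r - 1) s + B_avg (r - 1) (s - 1)) / 2"
      using 3 by (subst B_avg.simps) simp
    moreover have "B_avg (r - 1) s = 1 - 2 * binom_cdf (nat r) (s - 1)"
      and "B_avg (r - 1) (s - 1) = 1 - 2 * binom_cdf (nat r) (s - 2)"
      using "1.IH" 3 by (simp_all add: algebra_simps)
    moreover have "nat (r + 1) = Suc (nat r)"
      using 3 by simp
    ultimately show ?thesis
      by (simp add: binom_cdf.simps(2) field_simps)
  qed
qed

theorem mainTheorem20:
  fixes c s :: int
  assumes "c \<ge> 3" and "s \<ge> 2"
  shows "B (c * s - 1) s \<ge> 1 - 1 / 2 ^ nat (c - 1)"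
proof -
  have "c * s \<ge> 3 * s"
    using assms by (intro mult_right_mono) auto
  then have "2 * s - 2 \<le> c * s - 1"
    using assms by linarith
  then have "B_avg (c * s - 1) s = 1 - 2 * binom_cdf (nat (c * s)) (s - 1)"
    by (simp add: B_avg_eq_binom_cdf)
  moreover have "binom_cdf (nat (c * s)) (s - 1) \<le> 1 / 2 ^ nat c"
    using binom_cdf_mult_le[of "nat s" "nat c"] assms by (simp add: nat_mult_distrib)
  moreover have "1 / 2 ^ nat (c - 1) = 2 * (1 / (2::real) ^ nat c)"
    using assms by (simp add: nat_diff_distrib power_diff)
  ultimately show ?thesis
    using B_avg_le_B[of "c * s - 1" s] by linarith
qed

end
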